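(* Let $\gamma\in\mathbb{R}$ and $M>0$ be fixed, and for $0\le T\le S<\infty$, $w>0$ put $J_\gamma(T,S,w)=\int_T^S\frac{t^\gamma\,dt}{t^2+w^2}$. (a) If $\gamma>-1$, then $$J_\gamma(T,S,w)\simeq\frac{S-T}{S}\,\frac{S^{\gamma+1}}{(S\vee w)^2}\begin{cases}1,&\gamma>1,\\ 1+\log^+\frac{S}{T\vee w},&\gamma=1,\\ \left(\frac{T\vee w}{S\vee w}\right)^{\gamma-1},&\gamma\in(-1,1),\end{cases}$$ uniformly in $0\le T\le S<\infty$ and $0<w\le M$. (b) If $\gamma\le-1$, then $$J_\gamma(T,S,w)\simeq\frac{S-T}{S}\,\frac{T^{\gamma+1}}{(T\vee w)^2}\begin{cases}1+\log^+\frac{S\wedge w}{T},&\gamma=-1,\\ 1,&\gamma<-1,\end{cases}$$ uniformly in $0<T\le S<\infty$ and $0<w\le M$.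
   Context: $a\vee b=\max(a,b)$, $a\wedge b=\min(a,b)$, $\log^+x=\max(\log x,0)$. $X\simeq Y$ means $C^{-1}Y\le X\le CY$ with $C>0$ depending only on $\gamma$ and $M$. (When $T=S$ both sides are $0$; for $S=0$ in (a) the expression is understood as $0$.) *)

theory Defs
  imports "HOL-Analysis.Analysis"
begin

definition Jgam :: "real \<Rightarrow> real \<Rightarrow> real \<Rightarrow> real \<Rightarrow> real" where
  "Jgam \<gamma> T S w = integral {T..S} (\<lambda>t. t powr \<gamma> / (t\<^sup>2 + w\<^sup>2))"

definition logp :: "real \<Rightarrow> real" where
  "logp x = max (ln x) 0"

text \<open>Right-hand side of part (a); for S = 0 it evaluates to 0 since (S-T)/S = 0/0 = 0.\<close>
definition rhs_a :: "real \<Rightarrow> real \<Rightarrow> real \<Rightarrow> real \<Rightarrow> real" where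
  "rhs_a \<gamma> T S w = (S - T) / S * (S powr (\<gamma> + 1) / (max S w)\<^sup>2) *
     (if \<gamma> > 1 then 1
      else if \<gamma> = 1 then 1 + logp (S / max T w)
      else (max T w / max S w) powr (\<gamma> - 1))"

definition rhs_b :: "real \<Rightarrow> real \<Rightarrow> real \<Rightarrow> real \<Rightarrow> real" where
  "rhs_b \<gamma> T S w = (S - T) / S * (T powr (\<gamma> + 1) / (max T w)\<^sup>2) *
     (if \<gamma> = -1 then 1 + logp (min S w / T) else 1)"

end

theory Submission
  imports Defs
begin

(*
  The integrand t^gamma / (t^2 + w^2) is within a factor 2 of t^gamma / w^2 for t <= w and of
  t^(gamma - 2) for t >= w.  If T >= S/2 it varies only by a bounded factor on [T, S], so J is
  comparable to (S - T) S^gamma / (S^2 + w^2), which is the right-hand side up to bounded factors.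
  If T < S/2, then (S - T)/S lies in [1/2, 1]; splitting [T, S] at max T w (part (a)) or
  min S w (part (b)) and integrating the two power laws gives the upper bounds, with a logarithm
  at the critical exponents gamma = 1 and gamma = -1, while the lower bounds come from a single
  dyadic block [S/2, S] or [T, 2T], on which the first case applies.
*)

abbreviation jgam_kernel :: "real \<Rightarrow> real \<Rightarrow> real \<Rightarrow> real" where
  "jgam_kernel g w t \<equiv> t powr g / (t\<^sup>2 + w\<^sup>2)"

lemma jgam_kernel_denom_pos: "0 < w \<Longrightarrow> 0 < t\<^sup>2 + w\<^sup>2"
  for t w :: real by (simp add: add_nonneg_pos)

lemma integrable_jgam_kernel:
  fixes g w T S :: real
  assumes "0 \<le> T" "0 < w" "0 < T \<or> g > -1"
  shows "jgam_kernel g w integrable_on {T..S}"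
proof (cases "T > 0")
  case True
  show ?thesis
    using True assms jgam_kernel_denom_pos[of w]
    by (intro integrable_continuous_interval continuous_intros) auto
next
  case False
  then have T: "T = 0" and g: "g > -1" using assms by auto
  show ?thesis
  proof (cases "S \<ge> 0")
    case False
    then show ?thesis by (simp add: T integrable_on_empty)
  next
    case True
    have "(\<lambda>t. t powr g) absolutely_integrable_on {0..S}"
      using integrable_on_powr_from_0[OF g True] by (rule nonnegative_absolutely_integrable_1) auto
    moreover have cont: "continuous_on {0..S} (\<lambda>t. 1 / (t\<^sup>2 + w\<^sup>2))"
      using jgam_kernel_denom_pos[OF assms(2)] by (intro continuous_intros) auto
    ultimately have "(\<lambda>t. 1 / (t\<^sup>2 + w\<^sup>2) * t powr g) absolutely_integrable_on {0..S}"
      by (intro absolutely_integrable_bounded_measurable_product_real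
          continuous_imp_measurable_on_sets_lebesgue compact_imp_bounded compact_continuous_image) auto
    then show ?thesis
      by (simp add: T set_lebesgue_integral_eq_integral(1))
  qed
qed

lemma Jgam_nonneg: "0 \<le> T \<Longrightarrow> 0 \<le> Jgam g T S w"
  unfolding Jgam_def by (cases "jgam_kernel g w integrable_on {T..S}")
    (auto intro: integral_nonneg simp: not_integrable_integral)

lemma Jgam_refl [simp]: "Jgam g T T w = 0"
  by (simp add: Jgam_def)

lemma Jgam_subinterval_le:
  assumes "0 \<le> a" "a \<le> c" "c \<le> d" "d \<le> b" "0 < w" "0 < a \<or> g > -1"
  shows "Jgam g c d w \<le> Jgam g a b w"
  unfolding Jgam_def using assms
  by (intro integral_subset_le integrable_jgam_kernel) auto

lemma Jgam_split:
  assumes "0 \<le> a" "a \<le> c" "c \<le> b" "0 < w" "0 < a \<or> g > -1"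
  shows "Jgam g a b w = Jgam g a c w + Jgam g c b w"
  unfolding Jgam_def
  by (rule Henstock_Kurzweil_Integration.integral_combine[symmetric]) (use assms integrable_jgam_kernel in auto)

lemma Jgam_le_has_integral:
  assumes "(h has_integral I) {a..b}" "\<And>t. t \<in> {a..b} \<Longrightarrow> jgam_kernel g w t \<le> h t"
    "0 \<le> a" "0 < w" "0 < a \<or> g > -1"
  shows "Jgam g a b w \<le> I"
  unfolding Jgam_def using assms integrable_jgam_kernel
  by (intro has_integral_le[OF integrable_integral assms(1)]) auto

lemma has_integral_le_Jgam:
  assumes "(h has_integral I) {a..b}" "\<And>t. t \<in> {a..b} \<Longrightarrow> h t \<le> jgam_kernel g w t"
    "0 \<le> a" "0 < w" "0 < a \<or> g > -1"
  shows "I \<le> Jgam g a b w"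
  unfolding Jgam_def using assms integrable_jgam_kernel
  by (intro has_integral_le[OF assms(1) integrable_integral]) auto

text \<open>For \<open>a = 0\<close> and \<open>p > -1\<close> this is still the integral over \<open>[0, b]\<close>, since \<open>0 powr x = 0\<close>.\<close>
definition powr_integral :: "real \<Rightarrow> real \<Rightarrow> real \<Rightarrow> real" where
  "powr_integral p a b =
     (if p = -1 then ln b - ln a else (b powr (p + 1) - a powr (p + 1)) / (p + 1))"

lemma has_integral_powr_integral:
  assumes "0 \<le> a" "a \<le> b" "0 < a \<or> p > -1"
  shows "((\<lambda>t. t powr p) has_integral powr_integral p a b) {a..b}"
proof (cases "a = 0")
  case True
  then show ?thesis
    using has_integral_powr_from_0[of p b] assms by (simp add: powr_integral_def)
next
  case False
  then have a: "0 < a" using assms by simp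
  show ?thesis
  proof (cases "p = -1")
    case True
    have "(ln has_vector_derivative x powr p) (at x within {a..b})" if "x \<in> {a..b}" for x
      using that a True
      by (auto intro!: derivative_eq_intros simp: powr_minus_divide
          simp flip: has_real_derivative_iff_has_vector_derivative)
    then show ?thesis
      using fundamental_theorem_of_calculus[of a b ln] assms True by (simp add: powr_integral_def)
  next
    case False
    let ?F = "\<lambda>x. x powr (p + 1) / (p + 1)"
    have "(?F has_vector_derivative x powr p) (at x within {a..b})" if "x \<in> {a..b}" for x
      using that a False
      by (auto intro!: derivative_eq_intros simp flip: has_real_derivative_iff_has_vector_derivative)
    then show ?thesis
      using fundamental_theorem_of_calculus[of a b ?F] assms False
      by (simp add: powr_integral_def diff_divide_distrib)
  qed
qed

lemma powr_integral_le_upper: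
  assumes "0 \<le> a" "p > -1"
  shows "powr_integral p a b \<le> b powr (p + 1) / (p + 1)"
  using assms by (simp add: powr_integral_def divide_right_mono)

lemma powr_integral_le_lower:
  assumes "p < -1"
  shows "powr_integral p a b \<le> a powr (p + 1) / - (p + 1)"
proof -
  have "powr_integral p a b = (a powr (p + 1) - b powr (p + 1)) / - (p + 1)"
    using assms by (simp add: powr_integral_def divide_simps) argo
  also have "\<dots> \<le> a powr (p + 1) / - (p + 1)"
    using assms by (intro divide_right_mono) auto
  finally show ?thesis .
qed

lemma jgam_kernel_le_div_sq: "0 < w \<Longrightarrow> jgam_kernel g w t \<le> t powr g / w\<^sup>2"
  for g w t :: real by (intro divide_left_mono) (auto intro!: mult_pos_pos add_nonneg_pos)

lemma jgam_kernel_le_shift: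
  fixes g w t :: real
  assumes "0 \<le> t" "0 < w"
  shows "jgam_kernel g w t \<le> t powr (g - 2)"
proof (cases "t = 0")
  case False
  then have "jgam_kernel g w t \<le> t powr g / t\<^sup>2"
    using assms by (intro divide_left_mono) (auto simp: add_pos_nonneg)
  also have "\<dots> = t powr (g - 2)"
    using False assms by (simp add: powr_diff powr_numeral)
  finally show ?thesis .
qed simp

lemma jgam_kernel_ge_div_sq:
  fixes g w t :: real
  assumes "0 < t" "t \<le> w"
  shows "t powr g / (2 * w\<^sup>2) \<le> jgam_kernel g w t"
proof -
  have "t\<^sup>2 \<le> w\<^sup>2" using assms by (intro power_mono) auto
  then show ?thesis using assms by (intro divide_left_mono) (auto simp: add_pos_nonneg)
qed

lemma jgam_kernel_ge_shift:
  fixes g w t :: real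
  assumes "0 < w" "w \<le> t"
  shows "t powr (g - 2) / 2 \<le> jgam_kernel g w t"
proof -
  have t: "0 < t" using assms by simp
  have "w\<^sup>2 \<le> t\<^sup>2" using assms by (intro power_mono) auto
  then have "t powr g / (2 * t\<^sup>2) \<le> jgam_kernel g w t"
    using assms t by (intro divide_left_mono) (auto simp: add_pos_nonneg)
  moreover have "t powr g / (2 * t\<^sup>2) = t powr (g - 2) / 2"
    using t by (simp add: powr_diff powr_numeral)
  ultimately show ?thesis by simp
qed

lemma Jgam_le_powr_integral_div_sq:
  assumes "0 \<le> T" "T \<le> S" "0 < w" "0 < T \<or> g > -1"
  shows "Jgam g T S w \<le> powr_integral g T S / w\<^sup>2"
proof (rule Jgam_le_has_integral)
  show "((\<lambda>t. t powr g / w\<^sup>2) has_integral powr_integral g T S / w\<^sup>2) {T..S}"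
    using assms by (intro has_integral_divide has_integral_powr_integral) auto
qed (use assms jgam_kernel_le_div_sq in auto)

lemma Jgam_le_powr_integral_shift:
  assumes "0 \<le> T" "T \<le> S" "0 < w" "0 < T \<or> g > 1"
  shows "Jgam g T S w \<le> powr_integral (g - 2) T S"
proof (rule Jgam_le_has_integral)
  show "((\<lambda>t. t powr (g - 2)) has_integral powr_integral (g - 2) T S) {T..S}"
    using assms by (intro has_integral_powr_integral) auto
qed (use assms jgam_kernel_le_shift in auto)

lemma Jgam_ge_powr_integral_div_sq:
  assumes "0 < T" "T \<le> S" "S \<le> w"
  shows "powr_integral g T S / (2 * w\<^sup>2) \<le> Jgam g T S w"
proof (rule has_integral_le_Jgam)
  show "((\<lambda>t. t powr g / (2 * w\<^sup>2)) has_integral powr_integral g T S / (2 * w\<^sup>2)) {T..S}"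
    using assms by (intro has_integral_divide has_integral_powr_integral) auto
qed (use assms jgam_kernel_ge_div_sq in auto)

lemma Jgam_ge_powr_integral_shift:
  assumes "0 < w" "w \<le> T" "T \<le> S"
  shows "powr_integral (g - 2) T S / 2 \<le> Jgam g T S w"
proof (rule has_integral_le_Jgam)
  show "((\<lambda>t. t powr (g - 2) / 2) has_integral powr_integral (g - 2) T S / 2) {T..S}"
    using assms by (intro has_integral_divide has_integral_powr_integral) auto
qed (use assms jgam_kernel_ge_shift in auto)

lemma Jgam_le_head:
  assumes "g > -1" "0 \<le> a" "a \<le> b" "0 < w"
  shows "Jgam g a b w \<le> b powr (g + 1) / (g + 1) / w\<^sup>2"
proof -
  have "Jgam g a b w \<le> powr_integral g a b / w\<^sup>2"
    using assms by (intro Jgam_le_powr_integral_div_sq) auto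
  also have "\<dots> \<le> b powr (g + 1) / (g + 1) / w\<^sup>2"
    using assms by (intro divide_right_mono powr_integral_le_upper) auto
  finally show ?thesis .
qed

lemma Jgam_le_tail:
  assumes "g < 1" "0 < a" "a \<le> b" "0 < w"
  shows "Jgam g a b w \<le> a powr (g - 1) / (1 - g)"
proof -
  have "Jgam g a b w \<le> powr_integral (g - 2) a b"
    using assms by (intro Jgam_le_powr_integral_shift) auto
  also have "\<dots> \<le> a powr (g - 1) / (1 - g)"
    using powr_integral_le_lower[of "g - 2" a b] assms by simp
  finally show ?thesis .
qed

lemma powr_div_sq: "0 < x \<Longrightarrow> x powr p / x\<^sup>2 = x powr (p - 2)"
  for x p :: real by (simp add: powr_diff powr_numeral)

lemma powr_near_one_bounds:
  fixes x p :: real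
  assumes "1/2 \<le> x" "x \<le> 1"
  shows "x powr p \<le> 2 powr \<bar>p\<bar>" "1 / 2 powr \<bar>p\<bar> \<le> x powr p"
proof -
  have "ln (1/2) \<le> ln x" "ln x \<le> 0" using assms by auto
  then have "\<bar>ln x\<bar> \<le> ln 2" by (simp add: ln_div)
  then have "\<bar>p * ln x\<bar> \<le> \<bar>p\<bar> * ln 2" by (simp add: abs_mult mult_left_mono)
  then have "p * ln x \<le> \<bar>p\<bar> * ln 2" "- (\<bar>p\<bar> * ln 2) \<le> p * ln x" by linarith+
  moreover have "x powr p = exp (p * ln x)" "2 powr \<bar>p\<bar> = exp (\<bar>p\<bar> * ln 2)"
    using assms by (simp_all add: powr_def mult.commute)
  ultimately show "x powr p \<le> 2 powr \<bar>p\<bar>" "1 / 2 powr \<bar>p\<bar> \<le> x powr p"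
    by (auto simp: exp_minus field_simps simp flip: exp_add)
qed

definition comparable :: "real \<Rightarrow> real \<Rightarrow> real \<Rightarrow> bool" where
  "comparable C x y \<longleftrightarrow> x / C \<le> y \<and> y \<le> C * x"

lemma comparableI:
  assumes "0 \<le> x" "0 < c" "c \<le> C" "d \<le> C" "x / c \<le> y" "y \<le> d * x"
  shows "comparable C x y"
proof -
  have "x / C \<le> x / c" using assms by (intro divide_left_mono) auto
  moreover have "d * x \<le> C * x" using assms by (intro mult_right_mono) auto
  ultimately show ?thesis using assms unfolding comparable_def by linarith
qed

lemma comparable_mono:
  assumes "comparable C x y" "0 \<le> x" "0 < C" "C \<le> C'"
  shows "comparable C' x y"
  using assms by (intro comparableI[of x C C' C]) (auto simp: comparable_def)

lemma comparable_scale: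
  assumes "comparable C x y" "0 \<le> x" "0 < C" "1/2 \<le> \<theta>" "\<theta> \<le> 1"
  shows "comparable (2 * C) (\<theta> * x) y"
proof (rule comparableI[of _ C _ "2 * C"])
  have "\<theta> * x \<le> x" using assms by (simp add: mult_left_le_one_le)
  then show "\<theta> * x / C \<le> y"
    using assms by (meson comparable_def divide_right_mono order.trans less_imp_le)
  have "1 * x \<le> (2 * \<theta>) * x" using assms by (intro mult_right_mono) auto
  then have "x \<le> 2 * (\<theta> * x)" by simp
  then have "C * x \<le> C * (2 * (\<theta> * x))" using assms by (intro mult_left_mono) auto
  moreover have "y \<le> C * x" using assms by (simp add: comparable_def)
  ultimately show "y \<le> 2 * C * (\<theta> * x)" by (simp add: mult.assoc)
qed (use assms in auto)

lemma comparable_mult: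
  assumes "comparable K x y" "0 \<le> x" "0 < K" "0 < A" "1 / A \<le> X" "X \<le> A"
  shows "comparable (K * A) (x * X) y"
  unfolding comparable_def
proof
  have "x * X / (K * A) \<le> x * A / (K * A)"
    using assms by (intro divide_right_mono mult_left_mono) auto
  also have "\<dots> = x / K" using assms by simp
  finally show "x * X / (K * A) \<le> y" using assms by (simp add: comparable_def)
  have "1 \<le> A * X" using assms by (simp add: divide_le_eq mult.commute)
  then have "K * x * 1 \<le> K * x * (A * X)"
    using assms by (intro mult_left_mono) auto
  moreover have "y \<le> K * x * 1" using assms by (simp add: comparable_def)
  ultimately show "y \<le> K * A * (x * X)" by (simp add: mult_ac)
qed

lemma jgam_kernel_near_endpoint:
  fixes g w t b :: real
  assumes "0 < w" "0 < b" "b / 2 \<le> t" "t \<le> b"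
  shows "jgam_kernel g w b / 2 powr \<bar>g\<bar> \<le> jgam_kernel g w t"
    and "jgam_kernel g w t \<le> 4 * 2 powr \<bar>g\<bar> * jgam_kernel g w b"
proof -
  define K where "K = 2 powr \<bar>g\<bar>"
  have t: "0 < t" using assms by simp
  have "1/2 \<le> t / b" "t / b \<le> 1" using assms by (simp_all add: field_simps)
  then have ratio: "1 / K \<le> (t / b) powr g" "(t / b) powr g \<le> K"
    unfolding K_def by (rule powr_near_one_bounds)+
  have "b powr g * (1 / K) \<le> b powr g * (t / b) powr g" "b powr g * (t / b) powr g \<le> b powr g * K"
    using ratio by (intro mult_left_mono; simp)+
  moreover have "b powr g * (t / b) powr g = t powr g" using t assms by (simp add: powr_divide)
  ultimately have num: "b powr g / K \<le> t powr g" "t powr g \<le> K * b powr g"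
    by (simp_all add: mult.commute)
  have "(b / 2)\<^sup>2 \<le> t\<^sup>2" "t\<^sup>2 \<le> b\<^sup>2" using assms by (simp_all add: power_mono)
  then have den: "t\<^sup>2 + w\<^sup>2 \<le> b\<^sup>2 + w\<^sup>2" "(b\<^sup>2 + w\<^sup>2) / 4 \<le> t\<^sup>2 + w\<^sup>2"
    by (simp_all add: power_divide) (use zero_le_power2[of w] in linarith)
  have pos: "0 < t\<^sup>2 + w\<^sup>2" "0 < b\<^sup>2 + w\<^sup>2" "0 < K"
    using assms by (auto simp: K_def add_nonneg_pos)
  have "jgam_kernel g w b / K = (b powr g / K) / (b\<^sup>2 + w\<^sup>2)" by simp
  also have "\<dots> \<le> jgam_kernel g w t" using num den pos by (intro frac_le) auto
  finally show "jgam_kernel g w b / 2 powr \<bar>g\<bar> \<le> jgam_kernel g w t" unfolding K_def .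
  have "jgam_kernel g w t \<le> (K * b powr g) / ((b\<^sup>2 + w\<^sup>2) / 4)"
    using num den pos by (intro frac_le) auto
  also have "\<dots> = 4 * K * jgam_kernel g w b" by simp
  finally show "jgam_kernel g w t \<le> 4 * 2 powr \<bar>g\<bar> * jgam_kernel g w b" unfolding K_def .
qed

lemma Jgam_near_diagonal:
  assumes "0 < w" "0 < a" "a \<le> b" "b \<le> 2 * a"
  shows "comparable (4 * 2 powr \<bar>g\<bar>) ((b - a) * jgam_kernel g w b) (Jgam g a b w)"
proof (rule comparableI[of _ "2 powr \<bar>g\<bar>" _ "4 * 2 powr \<bar>g\<bar>"])
  let ?k = "jgam_kernel g w b"
  have "((\<lambda>t. ?k / 2 powr \<bar>g\<bar>) has_integral (b - a) * ?k / 2 powr \<bar>g\<bar>) {a..b}"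
    using has_integral_const_real[of "?k / 2 powr \<bar>g\<bar>" a b] assms by simp
  then show "(b - a) * ?k / 2 powr \<bar>g\<bar> \<le> Jgam g a b w"
    using assms jgam_kernel_near_endpoint(1)[of w b]
    by (intro has_integral_le_Jgam) auto
  have "((\<lambda>t. 4 * 2 powr \<bar>g\<bar> * ?k) has_integral 4 * 2 powr \<bar>g\<bar> * ((b - a) * ?k)) {a..b}"
    using has_integral_const_real[of "4 * 2 powr \<bar>g\<bar> * ?k" a b] assms by (simp add: mult_ac)
  then show "Jgam g a b w \<le> 4 * 2 powr \<bar>g\<bar> * ((b - a) * ?k)"
    using assms jgam_kernel_near_endpoint(2)[of w b]
    by (intro Jgam_le_has_integral) auto
qed (use assms in auto)

lemma sum_sq_max_bounds:
  fixes S w :: real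
  assumes "0 \<le> S" "0 < w"
  shows "(max S w)\<^sup>2 \<le> S\<^sup>2 + w\<^sup>2" "S\<^sup>2 + w\<^sup>2 \<le> 2 * (max S w)\<^sup>2"
proof -
  show "(max S w)\<^sup>2 \<le> S\<^sup>2 + w\<^sup>2" by (simp add: max_def)
  have "S\<^sup>2 \<le> (max S w)\<^sup>2" "w\<^sup>2 \<le> (max S w)\<^sup>2" using assms by (simp_all add: power_mono)
  then show "S\<^sup>2 + w\<^sup>2 \<le> 2 * (max S w)\<^sup>2" by simp
qed

lemma Jgam_ge_top_dyadic:
  assumes "0 < S" "0 \<le> T" "T \<le> S / 2" "0 < w" "0 < T \<or> g > -1"
  shows "S powr (g + 1) / (16 * 2 powr \<bar>g\<bar> * (max S w)\<^sup>2) \<le> Jgam g T S w"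
proof -
  define K where "K = 2 powr \<bar>g\<bar>"
  have pos: "0 < K" "0 < S\<^sup>2 + w\<^sup>2" "0 < max S w"
    using assms by (auto simp: K_def add_pos_pos)
  have "S powr (g + 1) / (16 * K * (max S w)\<^sup>2) = S * S powr g / (8 * K * (2 * (max S w)\<^sup>2))"
    using assms by (simp add: powr_add mult_ac)
  also have "\<dots> \<le> S * S powr g / (8 * K * (S\<^sup>2 + w\<^sup>2))"
    using assms pos sum_sq_max_bounds[of S w] by (intro divide_left_mono) auto
  also have "\<dots> = (S - S / 2) * jgam_kernel g w S / (4 * K)" by simp
  also have "\<dots> \<le> Jgam g (S / 2) S w"
    using Jgam_near_diagonal[of w "S / 2" S g] assms by (simp add: comparable_def K_def)
  also have "\<dots> \<le> Jgam g T S w" using assms by (intro Jgam_subinterval_le) auto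
  finally show ?thesis unfolding K_def .
qed

lemma Jgam_ge_bottom_dyadic:
  assumes "0 < T" "2 * T \<le> S" "0 < w"
  shows "T powr (g + 1) / (20 * (2 powr \<bar>g\<bar>)\<^sup>2 * (max T w)\<^sup>2) \<le> Jgam g T S w"
proof -
  define K where "K = 2 powr \<bar>g\<bar>"
  define m where "m = max T w"
  have pos: "0 < K" "0 < m" "0 < (2 * T)\<^sup>2 + w\<^sup>2"
    using assms by (auto simp: K_def m_def add_pos_pos)
  have "2 powr - \<bar>g\<bar> \<le> 2 powr g" by (intro powr_mono) auto
  then have "T powr g / K \<le> (2 * T) powr g"
    using assms by (simp add: K_def powr_mult powr_minus divide_inverse mult_left_mono)
  moreover have "(2 * T)\<^sup>2 + w\<^sup>2 \<le> 5 * m\<^sup>2"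
    using assms sum_sq_max_bounds[of T w] unfolding m_def by (simp add: power_mult_distrib)
  ultimately have "T powr g / K / (5 * m\<^sup>2) \<le> jgam_kernel g w (2 * T)"
    using pos by (intro frac_le) auto
  then have kernel: "T * (T powr g / K / (5 * m\<^sup>2)) \<le> T * jgam_kernel g w (2 * T)"
    using assms by (intro mult_left_mono) auto
  have "T powr (g + 1) / (20 * K\<^sup>2 * m\<^sup>2) = T * (T powr g / K / (5 * m\<^sup>2)) / (4 * K)"
    using assms by (simp add: powr_add power2_eq_square mult_ac)
  also have "\<dots> \<le> T * jgam_kernel g w (2 * T) / (4 * K)"
    using kernel pos by (intro divide_right_mono) auto
  also have "\<dots> \<le> Jgam g T (2 * T) w"
    using Jgam_near_diagonal[of w T "2 * T" g] assms by (simp add: comparable_def K_def)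
  also have "\<dots> \<le> Jgam g T S w" using assms by (intro Jgam_subinterval_le) auto
  finally show ?thesis unfolding K_def m_def .
qed

lemma logp_nonneg: "0 \<le> logp x"
  by (simp add: logp_def)

lemma logp_le_one:
  assumes "0 < x" "x \<le> 2"
  shows "logp x \<le> 1"
proof -
  have "ln x \<le> ln 2" using assms by simp
  then show ?thesis using ln_2_less_1 by (simp add: logp_def)
qed

lemma logp_eq_zero: "0 < x \<Longrightarrow> x \<le> 1 \<Longrightarrow> logp x = 0"
  by (simp add: logp_def)

definition profile_a :: "real \<Rightarrow> real \<Rightarrow> real \<Rightarrow> real \<Rightarrow> real" where
  "profile_a g T S w = S powr (g + 1) / (max S w)\<^sup>2 *
     (if g > 1 then 1
      else if g = 1 then 1 + logp (S / max T w)
      else (max T w / max S w) powr (g - 1))"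

definition profile_b :: "real \<Rightarrow> real \<Rightarrow> real \<Rightarrow> real \<Rightarrow> real" where
  "profile_b g T S w = T powr (g + 1) / (max T w)\<^sup>2 *
     (if g = -1 then 1 + logp (min S w / T) else 1)"

lemma rhs_a_eq_profile: "rhs_a g T S w = (S - T) / S * profile_a g T S w"
  by (simp add: rhs_a_def profile_a_def)

lemma rhs_b_eq_profile: "rhs_b g T S w = (S - T) / S * profile_b g T S w"
  by (simp add: rhs_b_def profile_b_def)

lemma profile_a_nonneg: "0 \<le> profile_a g T S w"
  by (simp add: profile_a_def logp_nonneg add_nonneg_nonneg)

lemma profile_b_nonneg: "0 \<le> profile_b g T S w"
  by (simp add: profile_b_def logp_nonneg add_nonneg_nonneg)

lemma Jgam_near_rhs_a:
  assumes "0 < S" "S / 2 \<le> T" "T \<le> S" "0 < w"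
  shows "comparable (4 * 2 powr \<bar>g\<bar> * (4 + 2 * 2 powr \<bar>g - 1\<bar>)) (rhs_a g T S w) (Jgam g T S w)"
proof -
  define m where "m = max S w"
  define F0 where "F0 = 2 + 2 powr \<bar>g - 1\<bar>"
  define F where "F = (if g > 1 then 1 else if g = 1 then 1 + logp (S / max T w)
      else (max T w / max S w) powr (g - 1))"
  define X where "X = (S\<^sup>2 + w\<^sup>2) / m\<^sup>2 * F"
  have m: "0 < m" "m\<^sup>2 \<le> S\<^sup>2 + w\<^sup>2" "S\<^sup>2 + w\<^sup>2 \<le> 2 * m\<^sup>2"
    using assms sum_sq_max_bounds[of S w] by (auto simp: m_def)
  have F0: "2 \<le> F0" by (simp add: F0_def)
  have F: "1 / F0 \<le> F \<and> F \<le> F0"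
  proof -
    have "1/2 \<le> max T w / max S w" "max T w / max S w \<le> 1"
      using assms by (auto simp: field_simps max_def)
    then have "1 / 2 powr \<bar>g - 1\<bar> \<le> (max T w / max S w) powr (g - 1)"
      "(max T w / max S w) powr (g - 1) \<le> 2 powr \<bar>g - 1\<bar>"
      by (simp_all add: powr_near_one_bounds)
    moreover have "1 / F0 \<le> 1 / 2 powr \<bar>g - 1\<bar>" by (auto simp: F0_def intro!: frac_le)
    moreover have "1 / F0 \<le> 1" using F0 by simp
    moreover have "0 \<le> logp (S / max T w)" "logp (S / max T w) \<le> 1"
      using assms by (auto intro!: logp_le_one simp: logp_nonneg field_simps max_def)
    ultimately show ?thesis using F0 by (auto simp: F_def F0_def)
  qed
  have r: "1 \<le> (S\<^sup>2 + w\<^sup>2) / m\<^sup>2" "(S\<^sup>2 + w\<^sup>2) / m\<^sup>2 \<le> 2"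
    using m by (simp_all add: field_simps)
  have "0 < 1 / F0" using F0 by simp
  then have "1 * (1 / F0) \<le> X" "X \<le> 2 * F0"
    unfolding X_def using r F by (intro mult_mono; linarith)+
  moreover have "1 / (2 * F0) \<le> 1 / F0" using F0 by (simp add: divide_le_eq)
  ultimately have X: "1 / (2 * F0) \<le> X" "X \<le> 2 * F0" by simp_all
  have "0 < S\<^sup>2 + w\<^sup>2" using assms by (simp add: add_pos_pos)
  then have "((S - T) * jgam_kernel g w S) * X = (S - T) * S powr g * F / m\<^sup>2"
    unfolding X_def by simp
  also have "\<dots> = rhs_a g T S w"
    using assms by (simp add: rhs_a_def F_def m_def powr_add)
  finally have rhs: "rhs_a g T S w = ((S - T) * jgam_kernel g w S) * X" ..
  have "comparable (4 * 2 powr \<bar>g\<bar>) ((S - T) * jgam_kernel g w S) (Jgam g T S w)"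
    using assms by (intro Jgam_near_diagonal) auto
  then have "comparable (4 * 2 powr \<bar>g\<bar> * (2 * F0)) (rhs_a g T S w) (Jgam g T S w)"
    unfolding rhs by (rule comparable_mult) (use assms F0 X in auto)
  then show ?thesis by (simp add: F0_def)
qed

lemma Jgam_near_rhs_b:
  assumes "0 < S" "S / 2 \<le> T" "T \<le> S" "0 < w"
  shows "comparable (4 * 2 powr \<bar>g\<bar> * (16 * 2 powr \<bar>g + 1\<bar>)) (rhs_b g T S w) (Jgam g T S w)"
proof -
  define mt where "mt = max T w"
  define K1 where "K1 = 2 powr \<bar>g + 1\<bar>"
  define F where "F = (if g = -1 then 1 + logp (min S w / T) else 1)"
  define r where "r = (S\<^sup>2 + w\<^sup>2) / mt\<^sup>2"
  define X where "X = r * ((T / S) powr (g + 1) * F)"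
  have T: "0 < T" using assms by simp
  have "(max S w)\<^sup>2 \<le> S\<^sup>2 + w\<^sup>2" "S\<^sup>2 + w\<^sup>2 \<le> 2 * (max S w)\<^sup>2"
    using assms by (simp_all add: sum_sq_max_bounds)
  moreover have "mt\<^sup>2 \<le> (max S w)\<^sup>2" "(max S w)\<^sup>2 \<le> 4 * mt\<^sup>2"
    using assms power_mono[of "max S w" "2 * mt" 2] by (auto simp: mt_def max_def)
  moreover have "0 < mt" using assms by (simp add: mt_def)
  ultimately have r: "1 \<le> r" "r \<le> 8" by (simp_all add: r_def field_simps)
  have "1/2 \<le> T / S" "T / S \<le> 1" using assms by (simp_all add: field_simps)
  then have ratio: "1 / K1 \<le> (T / S) powr (g + 1)" "(T / S) powr (g + 1) \<le> K1"
    unfolding K1_def by (rule powr_near_one_bounds)+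
  have F: "1 \<le> F" "F \<le> 2"
    using assms logp_le_one[of "min S w / T"] by (auto simp: F_def logp_nonneg field_simps)
  have K1: "1 \<le> K1" by (simp add: K1_def ge_one_powr_ge_zero)
  have "1 * (1 / K1 * 1) \<le> X" "X \<le> 8 * (K1 * 2)"
    unfolding X_def using r ratio F K1 by (intro mult_mono; simp)+
  moreover have "1 / (16 * K1) \<le> 1 / K1" using K1 by (simp add: divide_le_eq)
  ultimately have X: "1 / (16 * K1) \<le> X" "X \<le> 16 * K1" by simp_all
  have "0 < S\<^sup>2 + w\<^sup>2" using assms by (simp add: add_pos_pos)
  then have "((S - T) * jgam_kernel g w S) * X = (S - T) * (S powr g * (T / S) powr (g + 1)) * F / mt\<^sup>2"
    unfolding X_def r_def by simp
  also have "\<dots> = rhs_b g T S w"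
    using assms T by (simp add: rhs_b_def F_def mt_def powr_add powr_divide)
  finally have rhs: "rhs_b g T S w = ((S - T) * jgam_kernel g w S) * X" ..
  have "comparable (4 * 2 powr \<bar>g\<bar>) ((S - T) * jgam_kernel g w S) (Jgam g T S w)"
    using assms by (intro Jgam_near_diagonal) auto
  then have "comparable (4 * 2 powr \<bar>g\<bar> * (16 * K1)) (rhs_b g T S w) (Jgam g T S w)"
    unfolding rhs by (rule comparable_mult) (use assms K1 X in auto)
  then show ?thesis by (simp add: K1_def)
qed

lemma Jgam_far_a_gt1:
  assumes "g > 1" "0 < S" "0 \<le> T" "T \<le> S / 2" "0 < w"
  shows "comparable (16 * 2 powr \<bar>g\<bar> + 1 / (g + 1) + 1 / (g - 1)) (profile_a g T S w) (Jgam g T S w)"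
proof (rule comparableI[of _ "16 * 2 powr \<bar>g\<bar>" _ "1 / (g + 1) + 1 / (g - 1)"])
  have Q: "profile_a g T S w = S powr (g + 1) / (max S w)\<^sup>2" using assms by (simp add: profile_a_def)
  show "profile_a g T S w / (16 * 2 powr \<bar>g\<bar>) \<le> Jgam g T S w"
    using Jgam_ge_top_dyadic[of S T w g] assms by (simp add: Q mult_ac)
  have nonneg: "0 \<le> profile_a g T S w / (g + 1)" "0 \<le> profile_a g T S w / (g - 1)"
    using assms profile_a_nonneg[of g T S w] by simp_all
  have "Jgam g T S w \<le> profile_a g T S w / (g + 1) + profile_a g T S w / (g - 1)"
  proof (cases "S \<le> w")
    case True
    have "Jgam g T S w \<le> S powr (g + 1) / (g + 1) / w\<^sup>2"
      using assms by (intro Jgam_le_head) auto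
    also have "\<dots> = profile_a g T S w / (g + 1)" using True by (simp add: Q)
    finally show ?thesis using nonneg by linarith
  next
    case False
    have "Jgam g T S w \<le> powr_integral (g - 2) T S"
      using assms by (intro Jgam_le_powr_integral_shift) auto
    also have "\<dots> \<le> S powr (g - 1) / (g - 1)"
      using powr_integral_le_upper[of T "g - 2" S] assms by simp
    also have "\<dots> = profile_a g T S w / (g - 1)"
      using False assms by (simp add: Q powr_div_sq)
    finally show ?thesis using nonneg by linarith
  qed
  then show "Jgam g T S w \<le> (1 / (g + 1) + 1 / (g - 1)) * profile_a g T S w"
    by (simp add: algebra_simps)
qed (use assms profile_a_nonneg in auto)

lemma Jgam_far_a_eq1:
  assumes "0 < S" "0 \<le> T" "T \<le> S / 2" "0 < w"
  shows "comparable 64 (profile_a 1 T S w) (Jgam 1 T S w)"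
proof -
  have top: "S\<^sup>2 / (32 * (max S w)\<^sup>2) \<le> Jgam 1 T S w"
    using Jgam_ge_top_dyadic[of S T w 1] assms by (simp add: powr_numeral)
  have "profile_a 1 T S w / 64 \<le> Jgam 1 T S w \<and> Jgam 1 T S w \<le> 1 * profile_a 1 T S w"
  proof (cases "S \<le> w")
    case True
    have Q: "profile_a 1 T S w = S\<^sup>2 / w\<^sup>2"
      using True assms by (simp add: profile_a_def logp_eq_zero max_def powr_numeral)
    have "Jgam 1 T S w \<le> S\<^sup>2 / 2 / w\<^sup>2"
      using Jgam_le_head[of 1 T S w] assms by (simp add: powr_numeral)
    then show ?thesis using top True by (simp add: Q)
  next
    case False
    define u where "u = max T w"
    define L where "L = ln S - ln u"
    have u: "0 < u" "w \<le> u" "T \<le> u" "u \<le> S" using False assms by (auto simp: u_def)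
    have L: "0 \<le> L" using u by (simp add: L_def)
    have Q: "profile_a 1 T S w = 1 + L"
      using False u by (simp add: profile_a_def logp_def L_def ln_div u_def[symmetric] powr_numeral)
    have left: "Jgam 1 T u w \<le> 1 / 2"
      using Jgam_le_head[of 1 T w w] assms by (cases "T < w") (simp_all add: u_def powr_numeral)
    have right: "L / 2 \<le> Jgam 1 u S w" "Jgam 1 u S w \<le> L"
      using Jgam_ge_powr_integral_shift[of w u S 1] Jgam_le_powr_integral_shift[of u S w 1] assms u
      by (simp_all add: powr_integral_def L_def)
    have split: "Jgam 1 T S w = Jgam 1 T u w + Jgam 1 u S w"
      using assms u by (intro Jgam_split) auto
    have "1 / 32 \<le> Jgam 1 T S w" using top False assms by simp
    moreover have "0 \<le> Jgam 1 T u w" using assms by (simp add: Jgam_nonneg)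
    ultimately show ?thesis using split left right L by (simp add: Q)
  qed
  then show ?thesis by (intro comparableI[of _ 64 _ 1]) (auto simp: profile_a_nonneg)
qed

lemma Jgam_le_powr_max:
  assumes "-1 < g" "g < 1" "0 \<le> T" "T \<le> S" "0 < w" "w \<le> S"
  shows "Jgam g T S w \<le> (1 / (g + 1) + 1 / (1 - g)) * max T w powr (g - 1)"
proof -
  define u where "u = max T w"
  have u: "0 < u" "w \<le> u" "T \<le> u" "u \<le> S" using assms by (auto simp: u_def)
  have left: "Jgam g T u w \<le> u powr (g - 1) / (g + 1)"
  proof (cases "T < w")
    case True
    have "Jgam g T w w \<le> w powr (g + 1) / (g + 1) / w\<^sup>2"
      using assms True by (intro Jgam_le_head) auto
    also have "\<dots> = w powr (g + 1) / w\<^sup>2 / (g + 1)"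
      by (simp add: divide_divide_eq_left mult.commute)
    finally show ?thesis using True assms by (simp add: u_def powr_div_sq)
  qed (use assms in \<open>simp add: u_def\<close>)
  have right: "Jgam g u S w \<le> u powr (g - 1) / (1 - g)"
    using assms u by (intro Jgam_le_tail) auto
  have "Jgam g T S w = Jgam g T u w + Jgam g u S w"
    using assms u by (intro Jgam_split) auto
  then show ?thesis using left right by (simp add: u_def distrib_right)
qed

lemma Jgam_ge_powr_max:
  assumes "-1 < g" "g < 1" "0 < S" "0 \<le> T" "T \<le> S / 2" "0 < w" "w < S"
  shows "max T w powr (g - 1) / (32 * (2 powr \<bar>g\<bar>)\<^sup>2) \<le> Jgam g T S w"
proof -
  define K where "K = 2 powr \<bar>g\<bar>"
  define u where "u = max T w"
  have K: "1 \<le> K" by (simp add: K_def ge_one_powr_ge_zero)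
  have u: "0 < u" "w \<le> u" "T \<le> u" "u \<le> S" using assms by (auto simp: u_def)
  show ?thesis
  proof (cases "2 * u \<le> S")
    case True
    have "u powr (g - 1) / (32 * K\<^sup>2) \<le> u powr (g - 1) / (20 * K\<^sup>2)"
      using K by (intro divide_left_mono) auto
    also have "\<dots> = u powr (g + 1) / u\<^sup>2 / (20 * K\<^sup>2)"
      using u by (simp add: powr_div_sq)
    also have "\<dots> = u powr (g + 1) / (20 * K\<^sup>2 * (max u w)\<^sup>2)"
      using u by (simp add: max_absorb1 divide_divide_eq_left mult.commute)
    also have "\<dots> \<le> Jgam g u S w"
      using Jgam_ge_bottom_dyadic[of u S w g] True u \<open>0 < w\<close> by (simp add: K_def)
    also have "\<dots> \<le> Jgam g T S w" using assms u by (intro Jgam_subinterval_le) auto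
    finally show ?thesis by (simp add: K_def u_def)
  next
    case False
    have "1 / (2 * K) = 2 powr - \<bar>g\<bar> / 2" by (simp add: K_def powr_minus_divide)
    also have "\<dots> \<le> 2 powr g / 2" by (intro divide_right_mono powr_mono) auto
    also have "\<dots> = 2 powr (g - 1)" by (simp add: powr_diff)
    finally have two: "1 / (2 * K) \<le> 2 powr (g - 1)" .
    have "u powr (g - 1) / (32 * K\<^sup>2) = 1 / (2 * K) * u powr (g - 1) / (16 * K)"
      by (simp add: power2_eq_square)
    also have "\<dots> \<le> 2 powr (g - 1) * u powr (g - 1) / (16 * K)"
      using two K by (intro divide_right_mono mult_right_mono) auto
    also have "\<dots> = (2 * u) powr (g - 1) / (16 * K)" using u by (simp add: powr_mult)
    also have "\<dots> \<le> S powr (g - 1) / (16 * K)"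
    proof -
      have "(2 * u) powr (g - 1) \<le> S powr (g - 1)"
        using False assms by (intro powr_mono2') auto
      then show ?thesis using K by (intro divide_right_mono) auto
    qed
    also have "\<dots> = S powr (g + 1) / S\<^sup>2 / (16 * K)"
      using assms by (simp add: powr_div_sq)
    also have "\<dots> = S powr (g + 1) / (16 * K * (max S w)\<^sup>2)"
      using assms by (simp add: max_absorb1 divide_divide_eq_left mult.commute)
    also have "\<dots> \<le> Jgam g T S w"
      using Jgam_ge_top_dyadic[of S T w g] assms by (simp add: K_def)
    finally show ?thesis by (simp add: K_def u_def)
  qed
qed

lemma Jgam_far_a_lt1:
  assumes "-1 < g" "g < 1" "0 < S" "0 \<le> T" "T \<le> S / 2" "0 < w"
  shows "comparable (32 * (2 powr \<bar>g\<bar>)\<^sup>2 + 1 / (g + 1) + 1 / (1 - g))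
    (profile_a g T S w) (Jgam g T S w)"
proof (rule comparableI[of _ "32 * (2 powr \<bar>g\<bar>)\<^sup>2" _ "1 / (g + 1) + 1 / (1 - g)"])
  define K where "K = 2 powr \<bar>g\<bar>"
  have K: "1 \<le> K" by (simp add: K_def ge_one_powr_ge_zero)
  have "profile_a g T S w / (32 * K\<^sup>2) \<le> Jgam g T S w \<and>
    Jgam g T S w \<le> (1 / (g + 1) + 1 / (1 - g)) * profile_a g T S w"
  proof (cases "S \<le> w")
    case True
    then have Q: "profile_a g T S w = S powr (g + 1) / w\<^sup>2" using assms by (simp add: profile_a_def)
    have "profile_a g T S w / (32 * K\<^sup>2) \<le> profile_a g T S w / (16 * K)"
      using K by (intro divide_left_mono) (auto simp: power2_eq_square profile_a_nonneg)
    also have "\<dots> \<le> Jgam g T S w"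
      using Jgam_ge_top_dyadic[of S T w g] assms True by (simp add: Q K_def mult_ac)
    finally have lower: "profile_a g T S w / (32 * K\<^sup>2) \<le> Jgam g T S w" .
    have "Jgam g T S w \<le> 1 / (g + 1) * profile_a g T S w"
      using Jgam_le_head[of g T S w] assms by (simp add: Q)
    also have "\<dots> \<le> (1 / (g + 1) + 1 / (1 - g)) * profile_a g T S w"
      using assms by (intro mult_right_mono) (simp_all add: profile_a_nonneg)
    finally show ?thesis using lower by simp
  next
    case False
    have "profile_a g T S w = max T w powr (g - 1)"
      using False assms by (simp add: profile_a_def powr_div_sq powr_divide)
    then show ?thesis
      using Jgam_le_powr_max[of g T S w] Jgam_ge_powr_max[of g S T w] False assms
      by (simp add: K_def)
  qed
  then show "profile_a g T S w / (32 * (2 powr \<bar>g\<bar>)\<^sup>2) \<le> Jgam g T S w"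
    "Jgam g T S w \<le> (1 / (g + 1) + 1 / (1 - g)) * profile_a g T S w"
    by (simp_all add: K_def)
qed (use assms profile_a_nonneg in auto)

lemma Jgam_far_b_lt:
  assumes "g < -1" "0 < T" "2 * T \<le> S" "0 < w"
  shows "comparable (20 * (2 powr \<bar>g\<bar>)\<^sup>2 + 1 / (1 - g) + 1 / - (g + 1))
    (profile_b g T S w) (Jgam g T S w)"
proof (rule comparableI[of _ "20 * (2 powr \<bar>g\<bar>)\<^sup>2" _ "1 / (1 - g) + 1 / - (g + 1)"])
  define Q where "Q = profile_b g T S w"
  have Q_div: "0 \<le> Q / (1 - g)" "0 \<le> Q / - (g + 1)" using assms by (simp_all add: Q_def profile_b_nonneg)
  have "Jgam g T S w \<le> Q / (1 - g) + Q / - (g + 1)"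
  proof (cases "w \<le> T")
    case True
    have "Jgam g T S w \<le> T powr (g - 1) / (1 - g)"
      using assms by (intro Jgam_le_tail) auto
    also have "\<dots> = Q / (1 - g)"
      using True assms by (simp add: Q_def profile_b_def max_absorb1 powr_div_sq)
    finally show ?thesis using Q_div by linarith
  next
    case False
    have "Jgam g T S w \<le> powr_integral g T S / w\<^sup>2"
      using assms by (intro Jgam_le_powr_integral_div_sq) auto
    also have "\<dots> \<le> T powr (g + 1) / - (g + 1) / w\<^sup>2"
      using powr_integral_le_lower[of g T S] assms by (intro divide_right_mono) auto
    also have "\<dots> = Q / - (g + 1)"
      using False assms by (simp add: Q_def profile_b_def divide_divide_eq_left mult.commute)
    finally show ?thesis using Q_div by linarith
  qed
  then show "Jgam g T S w \<le> (1 / (1 - g) + 1 / - (g + 1)) * profile_b g T S w"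
    by (simp add: Q_def distrib_right)
  show "profile_b g T S w / (20 * (2 powr \<bar>g\<bar>)\<^sup>2) \<le> Jgam g T S w"
    using Jgam_ge_bottom_dyadic[of T S w g] assms by (simp add: profile_b_def mult_ac)
qed (use assms profile_b_nonneg in auto)

lemma Jgam_far_b_eq:
  assumes "0 < T" "2 * T \<le> S" "0 < w"
  shows "comparable 160 (profile_b (-1) T S w) (Jgam (-1) T S w)"
proof -
  have bottom: "1 / (80 * (max T w)\<^sup>2) \<le> Jgam (-1) T S w"
    using Jgam_ge_bottom_dyadic[of T S w "-1"] assms by simp
  have "profile_b (-1) T S w / 160 \<le> Jgam (-1) T S w \<and> Jgam (-1) T S w \<le> 1 * profile_b (-1) T S w"
  proof (cases "w \<le> T")
    case True
    have Q: "profile_b (-1) T S w = 1 / T\<^sup>2"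
      using True assms by (simp add: profile_b_def logp_eq_zero max_absorb1)
    have "Jgam (-1) T S w \<le> T powr (-2) / 2"
      using Jgam_le_tail[of "-1" T S w] assms by simp
    also have "\<dots> \<le> 1 / T\<^sup>2"
      using assms by (simp add: powr_minus_divide powr_numeral) (rule frac_le; simp)
    finally show ?thesis using bottom True by (simp add: Q max_absorb1)
  next
    case False
    define v where "v = min S w"
    define L where "L = ln v - ln T"
    have v: "T < v" "v \<le> w" "v \<le> S" using False assms by (auto simp: v_def)
    have L: "0 \<le> L / w\<^sup>2" using v assms by (simp add: L_def)
    have Q: "profile_b (-1) T S w = 1 / w\<^sup>2 + L / w\<^sup>2"
      using False assms v
      by (simp add: profile_b_def logp_def L_def ln_div v_def[symmetric] add_divide_distrib)
    have right: "Jgam (-1) v S w \<le> 1 / w\<^sup>2 / 2"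
      using Jgam_le_tail[of "-1" w S w] assms
      by (cases "w < S") (simp_all add: v_def powr_minus_divide powr_numeral)
    have left: "L / w\<^sup>2 / 2 \<le> Jgam (-1) T v w" "Jgam (-1) T v w \<le> L / w\<^sup>2"
      using Jgam_ge_powr_integral_div_sq[of T v w "-1"] Jgam_le_powr_integral_div_sq[of T v w "-1"]
        assms v by (simp_all add: powr_integral_def L_def mult.commute)
    have "Jgam (-1) T S w = Jgam (-1) T v w + Jgam (-1) v S w"
      using assms v by (intro Jgam_split) auto
    moreover have "0 \<le> Jgam (-1) v S w" using v assms by (simp add: Jgam_nonneg)
    moreover have "1 / w\<^sup>2 / 80 \<le> Jgam (-1) T S w" using bottom False by (simp add: mult.commute)
    ultimately show ?thesis using left right L by (simp add: Q)
  qed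
  then show ?thesis by (intro comparableI[of _ 160 _ 1]) (auto simp: profile_b_nonneg)
qed

lemma Jgam_far_a_uniform:
  assumes "g > -1"
  shows "\<exists>C>0. \<forall>T S w. 0 < S \<and> 0 \<le> T \<and> T \<le> S / 2 \<and> 0 < w \<longrightarrow>
           comparable C (profile_a g T S w) (Jgam g T S w)"
proof -
  consider "g > 1" | "g = 1" | "g < 1" by linarith
  then show ?thesis
  proof cases
    case 1
    let ?C = "16 * 2 powr \<bar>g\<bar> + 1 / (g + 1) + 1 / (g - 1)"
    have "0 < ?C" using 1 by (intro add_pos_pos) auto
    then show ?thesis using Jgam_far_a_gt1[OF 1] by blast
  next
    case 2
    then show ?thesis by (intro exI[of _ 64]) (auto intro: Jgam_far_a_eq1)
  next
    case 3
    let ?C = "32 * (2 powr \<bar>g\<bar>)\<^sup>2 + 1 / (g + 1) + 1 / (1 - g)"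
    have "0 < ?C" using 3 assms by (intro add_pos_pos) auto
    then show ?thesis using Jgam_far_a_lt1[OF assms 3] by blast
  qed
qed

lemma Jgam_far_b_uniform:
  assumes "g \<le> -1"
  shows "\<exists>C>0. \<forall>T S w. 0 < T \<and> 2 * T \<le> S \<and> 0 < w \<longrightarrow>
           comparable C (profile_b g T S w) (Jgam g T S w)"
proof (cases "g = -1")
  case True
  then show ?thesis by (intro exI[of _ 160]) (auto intro: Jgam_far_b_eq)
next
  case False
  then have g: "g < -1" using assms by simp
  let ?C = "20 * (2 powr \<bar>g\<bar>)\<^sup>2 + 1 / (1 - g) + 1 / - (g + 1)"
  have "0 < ?C" using g by (intro add_pos_pos) auto
  then show ?thesis using Jgam_far_b_lt[OF g] by blast
qed

lemma Jgam_comparable_rhs_a: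
  assumes "g > -1"
  shows "\<exists>C>0. \<forall>T S w. 0 \<le> T \<and> T \<le> S \<and> 0 < w \<longrightarrow>
           comparable C (rhs_a g T S w) (Jgam g T S w)"
proof -
  obtain Cf where Cf: "0 < Cf" "\<And>T S w. 0 < S \<Longrightarrow> 0 \<le> T \<Longrightarrow> T \<le> S / 2 \<Longrightarrow> 0 < w \<Longrightarrow>
      comparable Cf (profile_a g T S w) (Jgam g T S w)"
    using Jgam_far_a_uniform[OF assms] by blast
  define Cn where "Cn = 4 * 2 powr \<bar>g\<bar> * (4 + 2 * 2 powr \<bar>g - 1\<bar>)"
  have Cn: "0 < Cn" by (simp add: Cn_def add_pos_pos)
  have main: "comparable (Cn + 2 * Cf) (rhs_a g T S w) (Jgam g T S w)"
    if hyps: "0 \<le> T" "T \<le> S" "0 < w" for T S w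
  proof -
    have rhs: "rhs_a g T S w = (S - T) / S * profile_a g T S w" by (rule rhs_a_eq_profile)
    then have nonneg: "0 \<le> rhs_a g T S w" using hyps by (simp add: profile_a_nonneg)
    consider "S = 0" | "0 < S" "S / 2 \<le> T" | "0 < S" "T < S / 2"
      using hyps by fastforce
    then show ?thesis
    proof cases
      case 1
      then show ?thesis using hyps by (simp add: comparable_def rhs_a_def)
    next
      case 2
      then show ?thesis using hyps nonneg Cn Cf
        by (intro comparable_mono[OF Jgam_near_rhs_a[of S T w g]]) (auto simp: Cn_def)
    next
      case 3
      then have "comparable (2 * Cf) (rhs_a g T S w) (Jgam g T S w)"
        unfolding rhs using hyps Cf by (intro comparable_scale) (auto simp: profile_a_nonneg field_simps)
      then show ?thesis by (rule comparable_mono) (use nonneg Cn Cf in auto)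
    qed
  qed
  moreover have "0 < Cn + 2 * Cf" using Cn Cf by simp
  ultimately show ?thesis by blast
qed

lemma Jgam_comparable_rhs_b:
  assumes "g \<le> -1"
  shows "\<exists>C>0. \<forall>T S w. 0 < T \<and> T \<le> S \<and> 0 < w \<longrightarrow>
           comparable C (rhs_b g T S w) (Jgam g T S w)"
proof -
  obtain Cf where Cf: "0 < Cf" "\<And>T S w. 0 < T \<Longrightarrow> 2 * T \<le> S \<Longrightarrow> 0 < w \<Longrightarrow>
      comparable Cf (profile_b g T S w) (Jgam g T S w)"
    using Jgam_far_b_uniform[OF assms] by blast
  define Cn where "Cn = 4 * 2 powr \<bar>g\<bar> * (16 * 2 powr \<bar>g + 1\<bar>)"
  have Cn: "0 < Cn" by (simp add: Cn_def)
  have main: "comparable (Cn + 2 * Cf) (rhs_b g T S w) (Jgam g T S w)"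
    if hyps: "0 < T" "T \<le> S" "0 < w" for T S w
  proof -
    have rhs: "rhs_b g T S w = (S - T) / S * profile_b g T S w" by (rule rhs_b_eq_profile)
    then have nonneg: "0 \<le> rhs_b g T S w" using hyps by (simp add: profile_b_nonneg)
    consider "S / 2 \<le> T" | "T < S / 2" by linarith
    then show ?thesis
    proof cases
      case 1
      then show ?thesis using hyps nonneg Cn Cf
        by (intro comparable_mono[OF Jgam_near_rhs_b[of S T w g]]) (auto simp: Cn_def)
    next
      case 2
      then have "comparable (2 * Cf) (rhs_b g T S w) (Jgam g T S w)"
        unfolding rhs using hyps Cf by (intro comparable_scale) (auto simp: profile_b_nonneg field_simps)
      then show ?thesis by (rule comparable_mono) (use nonneg Cn Cf in auto)
    qed
  qed
  moreover have "0 < Cn + 2 * Cf" using Cn Cf by simp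
  ultimately show ?thesis by blast
qed

theorem lemma3p1:
  fixes \<gamma> M :: real
  assumes "M > 0"
  shows "(\<gamma> > -1 \<longrightarrow> (\<exists>C>0. \<forall>T S w. 0 \<le> T \<and> T \<le> S \<and> 0 < w \<and> w \<le> M \<longrightarrow>
            rhs_a \<gamma> T S w / C \<le> Jgam \<gamma> T S w \<and> Jgam \<gamma> T S w \<le> C * rhs_a \<gamma> T S w))
       \<and> (\<gamma> \<le> -1 \<longrightarrow> (\<exists>C>0. \<forall>T S w. 0 < T \<and> T \<le> S \<and> 0 < w \<and> w \<le> M \<longrightarrow>
            rhs_b \<gamma> T S w / C \<le> Jgam \<gamma> T S w \<and> Jgam \<gamma> T S w \<le> C * rhs_b \<gamma> T S w))"
  unfolding comparable_def[symmetric]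
  using Jgam_comparable_rhs_a[of \<gamma>] Jgam_comparable_rhs_b[of \<gamma>] by meson

end
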